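(* Let $n\ge2$ and let $\mathbf{r}$ be an $\mathbb{R}^n$-valued random vector with $\mathbb{E}|r_i|<\infty$ for all $i$; set $\mathbf{R}=e^{\mathbf{r}}$ (componentwise), $\mathbf{m}=\mathbb{E}[\mathbf{r}]$, and $J(\boldsymbol{\pi})=\mathbb{E}[\log\langle\boldsymbol{\pi},\mathbf{R}\rangle]-\langle\boldsymbol{\pi},\mathbf{m}\rangle$ for $\boldsymbol{\pi}\in\Delta_n$. If $\boldsymbol{\pi}^\star$ maximizes $J$ over $\Delta_n$, then for every $\boldsymbol{\pi}\in\Delta_n$, $$\mathbb{E}\Big[\log\frac{\langle\boldsymbol{\pi},\mathbf{R}\rangle}{\langle\boldsymbol{\pi}^\star,\mathbf{R}\rangle}\Big]\le\log\big(1+\langle\boldsymbol{\pi}-\boldsymbol{\pi}^\star,\mathbf{m}\rangle\big).$$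
   Context: $\Delta_n=\{\mathbf{x}\in[0,1]^n:\sum_ix_i=1\}$. $J(\boldsymbol{\pi})$ equals $\mathbb{E}[\gamma(\boldsymbol{\pi},\mathbf{r})]$ where $\gamma(\boldsymbol{\pi},\mathbf{r})=\log\big(\sum_{i:\pi_i>0}\pi_ie^{r_i}\big)-\sum_{i:\pi_i>0}\pi_ir_i$. *)

theory Defs
  imports "HOL-Probability.Probability"
begin

definition prob_simplex :: "('n::finite \<Rightarrow> real) set" where
  "prob_simplex = {x. (\<forall>i. 0 \<le> x i \<and> x i \<le> 1) \<and> (\<Sum>i\<in>UNIV. x i) = 1}"

definition ip :: "('n::finite \<Rightarrow> real) \<Rightarrow> ('n \<Rightarrow> real) \<Rightarrow> real" where
  "ip x y = (\<Sum>i\<in>UNIV. x i * y i)"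

definition mean_vec :: "'a measure \<Rightarrow> ('a \<Rightarrow> 'n::finite \<Rightarrow> real) \<Rightarrow> 'n \<Rightarrow> real" where
  "mean_vec M r = (\<lambda>i. integral\<^sup>L M (\<lambda>\<omega>. r \<omega> i))"

definition J :: "'a measure \<Rightarrow> ('a \<Rightarrow> 'n::finite \<Rightarrow> real) \<Rightarrow> ('n \<Rightarrow> real) \<Rightarrow> real" where
  "J M r p = integral\<^sup>L M (\<lambda>\<omega>. ln (ip p (\<lambda>i. exp (r \<omega> i)))) - ip p (mean_vec M r)"

end

theory Submission imports Defs begin

text \<open>Write \<open>Z = \<langle>p, R\<rangle> / \<langle>p\<^sup>\<star>, R\<rangle>\<close> and \<open>d = \<langle>p - p\<^sup>\<star>, m\<rangle>\<close>. Moving from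
  \<open>p\<^sup>\<star>\<close> towards \<open>p\<close> along the segment \<open>p\<^sup>\<star> + t (p - p\<^sup>\<star>)\<close> changes \<open>J\<close> by
  \<open>E[ln (1 + t (Z - 1))] - t d\<close>, so optimality of \<open>p\<^sup>\<star>\<close> gives \<open>E[ln (1 + t (Z - 1)) / t] \<le> d\<close>.
  By concavity of \<open>ln\<close> these chord slopes increase to \<open>Z - 1\<close> as \<open>t \<down> 0\<close>, and monotone
  convergence yields \<open>E[Z] \<le> 1 + d\<close>. Jensen's inequality for \<open>ln\<close> then gives
  \<open>E[ln Z] \<le> ln E[Z] \<le> ln (1 + d)\<close>.\<close>

lemma ln_one_plus_chord_antimono:
  fixes s t y :: real
  assumes "0 < s" "s \<le> t" "0 < 1 + t * y"
  shows "ln (1 + t * y) / t \<le> ln (1 + s * y) / s"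
proof -
  define u where "u = s / t"
  have u: "0 \<le> u" "u \<le> 1" using assms by (auto simp: u_def)
  have convex_comb: "1 + s * y = (1 - u) *\<^sub>R 1 + u *\<^sub>R (1 + t * y)"
    using assms by (simp add: u_def field_simps)
  have "(1 - u) * ln 1 + u * ln (1 + t * y) \<le> ln ((1 - u) *\<^sub>R 1 + u *\<^sub>R (1 + t * y))"
    by (rule concave_onD[OF ln_concave]) (use u assms in auto)
  then have "s * (ln (1 + t * y) / t) \<le> ln (1 + s * y)"
    by (simp only: convex_comb) (simp add: u_def)
  then show ?thesis using assms by (simp add: field_simps)
qed

lemma ln_one_plus_scaled_tendsto:
  fixes y :: real
  shows "(\<lambda>n. real (Suc n) * ln (1 + y / real (Suc n))) \<longlonglongrightarrow> y"
proof -
  have "(\<lambda>n. ln ((1 + y / real n) ^ n)) \<longlonglongrightarrow> ln (exp y)"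
    by (rule tendsto_ln[OF tendsto_exp_limit_sequentially]) simp
  then have "(\<lambda>n. real n * ln (1 + y / real n)) \<longlonglongrightarrow> y"
    by (simp add: ln_realpow)
  then show ?thesis by (rule LIMSEQ_Suc)
qed

lemma prob_simplex_segment:
  assumes "x \<in> prob_simplex" "y \<in> prob_simplex" "0 \<le> t" "t \<le> 1"
  shows "(\<lambda>i. x i + t * (y i - x i)) \<in> prob_simplex"
proof -
  have x: "\<And>i. 0 \<le> x i \<and> x i \<le> 1" "sum x UNIV = 1"
    and y: "\<And>i. 0 \<le> y i \<and> y i \<le> 1" "sum y UNIV = 1"
    using assms by (auto simp: prob_simplex_def)
  have comb: "x i + t * (y i - x i) = (1 - t) * x i + t * y i" for i
    by (simp add: algebra_simps)
  have "(1 - t) * x i + t * y i \<le> (1 - t) * 1 + t * 1" for i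
    using x y assms by (intro add_mono mult_left_mono) auto
  moreover have "(\<Sum>i\<in>UNIV. (1 - t) * x i + t * y i) = 1"
    using x y by (simp add: sum.distrib sum_distrib_left[symmetric])
  ultimately show ?thesis
    using x y assms unfolding prob_simplex_def comb by auto
qed

lemma ip_diff_left: "ip (\<lambda>i. y i - x i) v = ip y v - ip x v"
  unfolding ip_def by (simp add: sum_subtractf algebra_simps)

lemma ip_segment_left:
  "ip (\<lambda>i. x i + t * (y i - x i)) v = ip x v + t * ip (\<lambda>i. y i - x i) v"
  unfolding ip_def by (simp add: algebra_simps sum.distrib sum_distrib_left sum_subtractf)

lemma ip_simplex_lower_bound:
  assumes "q \<in> prob_simplex" "\<And>i. lo \<le> v i"
  shows "lo \<le> ip q v"
proof -
  have q: "\<And>i. 0 \<le> q i" "sum q UNIV = 1" using assms(1) by (auto simp: prob_simplex_def)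
  then have "lo = (\<Sum>i\<in>UNIV. q i * lo)" by (simp add: sum_distrib_right[symmetric])
  also have "\<dots> \<le> ip q v"
    unfolding ip_def using q assms(2) by (intro sum_mono mult_left_mono) auto
  finally show ?thesis .
qed

lemma ip_simplex_upper_bound:
  assumes "q \<in> prob_simplex" "\<And>i. v i \<le> hi"
  shows "ip q v \<le> hi"
proof -
  have q: "\<And>i. 0 \<le> q i" "sum q UNIV = 1" using assms(1) by (auto simp: prob_simplex_def)
  have "ip q v \<le> (\<Sum>i\<in>UNIV. q i * hi)"
    unfolding ip_def using q assms(2) by (intro sum_mono mult_left_mono) auto
  also have "\<dots> = hi" using q by (simp add: sum_distrib_right[symmetric])
  finally show ?thesis .
qed

lemma ip_exp_bounds:
  assumes "q \<in> prob_simplex"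
  shows "exp (- (\<Sum>j\<in>UNIV. \<bar>a j\<bar>)) \<le> ip q (\<lambda>i. exp (a i))"
    and "ip q (\<lambda>i. exp (a i)) \<le> exp (\<Sum>j\<in>UNIV. \<bar>a j\<bar>)"
proof -
  let ?S = "\<Sum>j\<in>UNIV. \<bar>a j\<bar>"
  have bound: "\<bar>a i\<bar> \<le> ?S" for i by (rule member_le_sum) auto
  have "exp (- ?S) \<le> exp (a i)" "exp (a i) \<le> exp ?S" for i
    using bound[of i] by (auto dest: abs_le_D1 abs_le_D2)
  then show "exp (- ?S) \<le> ip q (\<lambda>i. exp (a i))" "ip q (\<lambda>i. exp (a i)) \<le> exp ?S"
    by (simp_all add: ip_simplex_lower_bound[OF assms] ip_simplex_upper_bound[OF assms])
qed

lemma ip_exp_pos: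
  assumes "q \<in> prob_simplex"
  shows "0 < ip q (\<lambda>i. exp (a i))"
  using ip_exp_bounds(1)[OF assms, of a] by (meson exp_gt_zero less_le_trans)

lemma abs_ln_ip_exp_le:
  assumes "q \<in> prob_simplex"
  shows "\<bar>ln (ip q (\<lambda>i. exp (a i)))\<bar> \<le> (\<Sum>j\<in>UNIV. \<bar>a j\<bar>)"
proof -
  have "- (\<Sum>j\<in>UNIV. \<bar>a j\<bar>) \<le> ln (ip q (\<lambda>i. exp (a i)))"
    using ip_exp_bounds(1)[OF assms, of a] ip_exp_pos[OF assms, of a] by (simp add: ln_ge_iff)
  moreover have "ln (ip q (\<lambda>i. exp (a i))) \<le> (\<Sum>j\<in>UNIV. \<bar>a j\<bar>)"
    using ip_exp_bounds(2)[OF assms, of a] ip_exp_pos[OF assms, of a] by (metis ln_exp ln_mono)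
  ultimately show ?thesis by linarith
qed

lemma integrable_ln_ip_exp:
  assumes "\<And>i. integrable M (\<lambda>\<omega>. r \<omega> i)" "q \<in> prob_simplex"
  shows "integrable M (\<lambda>\<omega>. ln (ip q (\<lambda>i. exp (r \<omega> i))))"
proof (rule Bochner_Integration.integrable_bound)
  show "integrable M (\<lambda>\<omega>. \<Sum>j\<in>UNIV. \<bar>r \<omega> j\<bar>)"
    using assms(1) by (intro Bochner_Integration.integrable_sum Bochner_Integration.integrable_abs)
  show "(\<lambda>\<omega>. ln (ip q (\<lambda>i. exp (r \<omega> i)))) \<in> borel_measurable M"
    using assms(1) unfolding ip_def by measurable
  show "AE \<omega> in M. norm (ln (ip q (\<lambda>i. exp (r \<omega> i)))) \<le> norm (\<Sum>j\<in>UNIV. \<bar>r \<omega> j\<bar>)"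
    using abs_ln_ip_exp_le[OF assms(2)] by (auto intro!: AE_I2 order.trans[OF _ abs_ge_self])
qed

context prob_space
begin

lemma expectation_ln_le_ln_expectation:
  fixes X :: "'a \<Rightarrow> real"
  assumes "integrable M X" "AE \<omega> in M. 0 < X \<omega>" "integrable M (\<lambda>\<omega>. ln (X \<omega>))"
  shows "expectation (\<lambda>\<omega>. ln (X \<omega>)) \<le> ln (expectation X)"
proof -
  have "- ln (expectation X) \<le> expectation (\<lambda>\<omega>. - ln (X \<omega>))"
    using ln_concave unfolding concave_on_def
    by (intro jensens_inequality[where I = "{0<..}"]) (use assms in auto)
  then show ?thesis by simp
qed

lemma expectation_le_of_ln_chord_bound:
  fixes Z :: "'a \<Rightarrow> real"
  assumes Z_meas: "Z \<in> borel_measurable M" and Z_pos: "\<And>\<omega>. 0 < Z \<omega>"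
    and chord_int: "\<And>t. 0 < t \<Longrightarrow> t \<le> 1 \<Longrightarrow> integrable M (\<lambda>\<omega>. ln (1 + t * (Z \<omega> - 1)))"
    and chord_le: "\<And>t. 0 < t \<Longrightarrow> t \<le> 1 \<Longrightarrow> expectation (\<lambda>\<omega>. ln (1 + t * (Z \<omega> - 1))) \<le> t * d"
  shows "integrable M Z" "expectation Z \<le> 1 + d"
proof -
  define f where "f n \<omega> = real (Suc n) * ln (1 + (Z \<omega> - 1) / real (Suc n))" for n \<omega>
  have f_chord: "f n = (\<lambda>\<omega>. ln (1 + t * (Z \<omega> - 1)) / t)" if "t = 1 / real (Suc n)" for n t
    using that by (simp add: f_def fun_eq_iff)
  have f_int: "integrable M (f n)" for n
    using chord_int[of "1 / real (Suc n)"] by (simp add: f_chord[OF refl])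
  have f_le: "expectation (f n) \<le> d" for n
  proof -
    let ?t = "1 / real (Suc n)"
    have "expectation (f n) = expectation (\<lambda>\<omega>. ln (1 + ?t * (Z \<omega> - 1))) / ?t"
      unfolding f_chord[OF refl] by (rule integral_divide_zero)
    also have "\<dots> \<le> ?t * d / ?t"
      using chord_le[of ?t] by (intro divide_right_mono) auto
    finally show ?thesis by simp
  qed
  have f_mono: "mono (\<lambda>n. f n \<omega>)" for \<omega>
    unfolding mono_iff_le_Suc
  proof
    fix n
    have "0 < (1 - 1 / real (Suc n)) + 1 / real (Suc n) * Z \<omega>"
      using Z_pos[of \<omega>] by (intro add_nonneg_pos) auto
    then show "f n \<omega> \<le> f (Suc n) \<omega>"
      unfolding f_chord[OF refl, of n] f_chord[OF refl, of "Suc n"]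
      by (intro ln_one_plus_chord_antimono) (auto simp: algebra_simps diff_divide_distrib frac_le)
  qed
  have f_lim: "(\<lambda>n. f n \<omega>) \<longlonglongrightarrow> Z \<omega> - 1" for \<omega>
    unfolding f_def by (rule ln_one_plus_scaled_tendsto)
  have "incseq (\<lambda>n. expectation (f n))"
    using f_mono f_int by (auto simp: incseq_def mono_def intro!: integral_mono)
  then obtain L where L: "(\<lambda>n. expectation (f n)) \<longlonglongrightarrow> L"
    using incseq_convergent f_le by metis
  have Z1_meas: "(\<lambda>\<omega>. Z \<omega> - 1) \<in> borel_measurable M"
    using Z_meas by measurable
  have Z1_int: "integrable M (\<lambda>\<omega>. Z \<omega> - 1)" and "expectation (\<lambda>\<omega>. Z \<omega> - 1) = L"
    using integrable_monotone_convergence[OF f_int _ _ L Z1_meas]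
      integral_monotone_convergence[OF f_int _ _ L Z1_meas] f_mono f_lim by auto
  moreover have "L \<le> d" using L f_le by (intro LIMSEQ_le_const2) auto
  moreover show "integrable M Z"
    using Bochner_Integration.integrable_add[OF Z1_int integrable_const[of 1]] by simp
  ultimately show "expectation Z \<le> 1 + d"
    by (simp add: Bochner_Integration.integral_diff prob_space)
qed

end

lemma optimal_portfolio_chord_bound:
  fixes r :: "'a \<Rightarrow> 'n::finite \<Rightarrow> real"
  assumes "\<And>i. integrable M (\<lambda>\<omega>. r \<omega> i)"
    and "pstar \<in> prob_simplex" "\<And>q. q \<in> prob_simplex \<Longrightarrow> J M r q \<le> J M r pstar"
    and "p \<in> prob_simplex" "0 < t" "t \<le> 1"
  defines "Z \<equiv> \<lambda>\<omega>. ip p (\<lambda>i. exp (r \<omega> i)) / ip pstar (\<lambda>i. exp (r \<omega> i))"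
  shows "integrable M (\<lambda>\<omega>. ln (1 + t * (Z \<omega> - 1)))"
    and "integral\<^sup>L M (\<lambda>\<omega>. ln (1 + t * (Z \<omega> - 1))) \<le> t * ip (\<lambda>i. p i - pstar i) (mean_vec M r)"
proof -
  define q where "q = (\<lambda>i. pstar i + t * (p i - pstar i))"
  have q: "q \<in> prob_simplex"
    unfolding q_def using assms by (intro prob_simplex_segment) auto
  have ln_ratio: "ln (1 + t * (Z \<omega> - 1))
      = ln (ip q (\<lambda>i. exp (r \<omega> i))) - ln (ip pstar (\<lambda>i. exp (r \<omega> i)))" for \<omega>
  proof -
    have "ip q (\<lambda>i. exp (r \<omega> i)) = ip pstar (\<lambda>i. exp (r \<omega> i))
        + t * (ip p (\<lambda>i. exp (r \<omega> i)) - ip pstar (\<lambda>i. exp (r \<omega> i)))"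
      unfolding q_def ip_segment_left ip_diff_left ..
    then have "1 + t * (Z \<omega> - 1) = ip q (\<lambda>i. exp (r \<omega> i)) / ip pstar (\<lambda>i. exp (r \<omega> i))"
      using ip_exp_pos[OF assms(2), of "r \<omega>"] by (simp add: Z_def field_simps)
    then show ?thesis
      using ip_exp_pos[OF q, of "r \<omega>"] ip_exp_pos[OF assms(2), of "r \<omega>"] by (simp add: ln_div)
  qed
  have int_q: "integrable M (\<lambda>\<omega>. ln (ip q (\<lambda>i. exp (r \<omega> i))))"
    and int_pstar: "integrable M (\<lambda>\<omega>. ln (ip pstar (\<lambda>i. exp (r \<omega> i))))"
    using integrable_ln_ip_exp assms(1,2) q by blast+
  then show "integrable M (\<lambda>\<omega>. ln (1 + t * (Z \<omega> - 1)))"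
    unfolding ln_ratio by simp
  have "integral\<^sup>L M (\<lambda>\<omega>. ln (1 + t * (Z \<omega> - 1)))
      = J M r q - J M r pstar + t * ip (\<lambda>i. p i - pstar i) (mean_vec M r)"
    unfolding ln_ratio J_def using int_q int_pstar by (simp add: q_def ip_segment_left)
  then show "integral\<^sup>L M (\<lambda>\<omega>. ln (1 + t * (Z \<omega> - 1))) \<le> t * ip (\<lambda>i. p i - pstar i) (mean_vec M r)"
    using assms(3)[OF q] by simp
qed

theorem mainTheorem20:
  fixes M :: "'a measure" and r :: "'a \<Rightarrow> 'n::finite \<Rightarrow> real"
    and pstar p :: "'n \<Rightarrow> real"
  assumes "prob_space M"
    and "CARD('n) \<ge> 2"
    and "\<And>i. (\<lambda>\<omega>. r \<omega> i) \<in> borel_measurable M"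
    and "\<And>i. integrable M (\<lambda>\<omega>. r \<omega> i)"
    and "pstar \<in> prob_simplex"
    and "\<And>q. q \<in> prob_simplex \<Longrightarrow> J M r q \<le> J M r pstar"
    and "p \<in> prob_simplex"
  shows "integral\<^sup>L M (\<lambda>\<omega>. ln (ip p (\<lambda>i. exp (r \<omega> i)) / ip pstar (\<lambda>i. exp (r \<omega> i))))
           \<le> ln (1 + ip (\<lambda>i. p i - pstar i) (mean_vec M r))"
proof -
  interpret prob_space M by fact
  note [measurable] = assms(3)
  define Z where "Z \<omega> = ip p (\<lambda>i. exp (r \<omega> i)) / ip pstar (\<lambda>i. exp (r \<omega> i))" for \<omega>
  define d where "d = ip (\<lambda>i. p i - pstar i) (mean_vec M r)"
  note chord = optimal_portfolio_chord_bound[OF assms(4-7), folded Z_def d_def]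
  have Z_pos: "0 < Z \<omega>" for \<omega>
    unfolding Z_def by (intro divide_pos_pos ip_exp_pos assms(5,7))
  have Z_meas: "Z \<in> borel_measurable M"
    unfolding Z_def ip_def by measurable
  note Z_int = expectation_le_of_ln_chord_bound(1)[OF Z_meas Z_pos chord]
  have "integrable M (\<lambda>\<omega>. ln (Z \<omega>))"
    using chord(1)[of 1] by simp
  then have "expectation (\<lambda>\<omega>. ln (Z \<omega>)) \<le> ln (expectation Z)"
    using Z_int Z_pos by (intro expectation_ln_le_ln_expectation) auto
  also have "\<dots> \<le> ln (1 + d)"
    using expectation_le_of_ln_chord_bound(2)[OF Z_meas Z_pos chord]
      expectation_greater[OF Z_int, of 0] Z_pos by simp
  finally show ?thesis unfolding Z_def d_def .
qed

end
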